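(* Let $A$ be a homothetically shrinking soliton centered at $(x_0,t_0)$ such that $i_VF=0$ for some non-zero vector $V\in\mathbb R^n$. Then $A$ descends to the hyperplane perpendicular to $V$: in an exponential gauge (one with $(x-x_0)^jA_j(x)=0$), one has $V^jA_j\equiv0$ and $A_j(x+cV)=A_j(x)$ for all $x\in\mathbb R^n$, $c\in\mathbb R$ and all $j$, so that $A$ is a connection on a trivial $G$-vector bundle over the hyperplane $V^\perp$ pulled back along the orthogonal projection.
   Context: $G\subset SO(r)$ compact with Lie algebra $\mathfrak g$; $E$ the trivial $G$-vector bundle over $\mathbb R^n$. Connection $A=A_idx^i$, curvature $F_{ij}=\partial_iA_j-\partial_jA_i+[A_i,A_j]$; repeated indices summed; $\nabla_pT=\partial_pT+[A_p,T]$; $i_VF=V^pF_{pj}dx^j$. A homothetically shrinking soliton centered at $(x_0,t_0)$ satisfies $\nabla_pF_{pj}-\frac1{2t_0}(x-x_0)^pF_{pj}=0$ for all $j$. *)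

theory Defs
  imports "HOL-Analysis.Analysis"
begin

definition SO :: "(real^'r^'r) set" where
  "SO = {M. transpose M ** M = mat 1 \<and> det M = 1}"

definition compact_subgroup_SO :: "(real^'r^'r) set \<Rightarrow> bool" where
  "compact_subgroup_SO G \<longleftrightarrow> G \<subseteq> SO \<and> mat 1 \<in> G \<and>
     (\<forall>M\<in>G. \<forall>N\<in>G. M ** N \<in> G) \<and> (\<forall>M\<in>G. transpose M \<in> G) \<and> compact G"

primrec matpow :: "real^'r^'r \<Rightarrow> nat \<Rightarrow> real^'r^'r" where
  "matpow X 0 = mat 1"
| "matpow X (Suc k) = X ** matpow X k"

definition mexp :: "real^'r^'r \<Rightarrow> real^'r^'r" where
  "mexp X = (\<Sum>k. (1 / fact k) *\<^sub>R matpow X k)"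

definition lie_algebra :: "(real^'r^'r) set \<Rightarrow> (real^'r^'r) set" where
  "lie_algebra G = {X. \<forall>t::real. mexp (t *\<^sub>R X) \<in> G}"

definition bracket :: "real^'r^'r \<Rightarrow> real^'r^'r \<Rightarrow> real^'r^'r" where
  "bracket X Y = X ** Y - Y ** X"

definition pd :: "'n::finite \<Rightarrow> (real^'n \<Rightarrow> 'b::real_normed_vector) \<Rightarrow> real^'n \<Rightarrow> 'b" where
  "pd i f x = frechet_derivative f (at x) (axis i 1)"

fun iter_pd :: "'n::finite list \<Rightarrow> (real^'n \<Rightarrow> 'b::real_normed_vector) \<Rightarrow> real^'n \<Rightarrow> 'b" where
  "iter_pd [] f = f"
| "iter_pd (i # is) f = pd i (iter_pd is f)"

definition smooth_fun :: "(real^'n::finite \<Rightarrow> 'b::real_normed_vector) \<Rightarrow> bool" where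
  "smooth_fun f \<longleftrightarrow> (\<forall>is x. iter_pd is f differentiable (at x))"

definition curv :: "('n::finite \<Rightarrow> real^'n \<Rightarrow> real^'r^'r) \<Rightarrow> 'n \<Rightarrow> 'n \<Rightarrow> real^'n \<Rightarrow> real^'r^'r" where
  "curv A i j x = pd i (A j) x - pd j (A i) x + bracket (A i x) (A j x)"

definition cov_d :: "('n::finite \<Rightarrow> real^'n \<Rightarrow> real^'r^'r) \<Rightarrow> 'n \<Rightarrow> (real^'n \<Rightarrow> real^'r^'r) \<Rightarrow> real^'n \<Rightarrow> real^'r^'r" where
  "cov_d A p T x = pd p T x + bracket (A p x) (T x)"

definition shrinking_soliton :: "('n::finite \<Rightarrow> real^'n \<Rightarrow> real^'r^'r) \<Rightarrow> real^'n \<Rightarrow> real \<Rightarrow> bool" where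
  "shrinking_soliton A x0 t0 \<longleftrightarrow> t0 > 0 \<and>
     (\<forall>j x. (\<Sum>p\<in>UNIV. cov_d A p (curv A p j) x)
            - (1 / (2 * t0)) *\<^sub>R (\<Sum>p\<in>UNIV. (x - x0) $ p *\<^sub>R curv A p j x) = 0)"

definition interior_VF :: "('n::finite \<Rightarrow> real^'n \<Rightarrow> real^'r^'r) \<Rightarrow> real^'n \<Rightarrow> 'n \<Rightarrow> real^'n \<Rightarrow> real^'r^'r" where
  "interior_VF A V j x = (\<Sum>p\<in>UNIV. V $ p *\<^sub>R curv A p j x)"

definition exponential_gauge :: "('n::finite \<Rightarrow> real^'n \<Rightarrow> real^'r^'r) \<Rightarrow> real^'n \<Rightarrow> bool" where
  "exponential_gauge A x0 \<longleftrightarrow> (\<forall>x. (\<Sum>j\<in>UNIV. (x - x0) $ j *\<^sub>R A j x) = 0)"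

end

theory Submission
  imports Defs
begin

text \<open>Write \<open>y = x - x\<^sub>0\<close>. Differentiating the gauge condition \<open>y\<^sup>j A\<^sub>j = 0\<close> gives
  \<open>A\<^sub>k + y\<^sup>j \<partial>\<^sub>k A\<^sub>j = 0\<close>, so the radial contraction of the curvature is
  \<open>y\<^sup>j F\<^sub>p\<^sub>j = -(A\<^sub>p + y\<^sup>j \<partial>\<^sub>j A\<^sub>p)\<close> (the bracket term vanishes by the gauge condition again).
  Contracting \<open>i\<^sub>VF = 0\<close> with \<open>y\<close> therefore shows that \<open>S = V\<^sup>k A\<^sub>k\<close> satisfies the Euler equation
  \<open>S + y\<^sup>j \<partial>\<^sub>j S = 0\<close> of a function homogeneous of degree \<open>-1\<close> about \<open>x\<^sub>0\<close>; being smooth at \<open>x\<^sub>0\<close>,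
  it vanishes (\<open>t S(x\<^sub>0 + t y)\<close> is constant in \<open>t\<close>). Then \<open>\<partial>\<^sub>j S = 0\<close> and \<open>[S, A\<^sub>j] = 0\<close>, so
  \<open>i\<^sub>VF = 0\<close> reduces to \<open>V\<^sup>k \<partial>\<^sub>k A\<^sub>j = 0\<close>: each \<open>A\<^sub>j\<close> is constant along \<open>V\<close>.\<close>

lemma linear_bracket_right: "linear (bracket X)"
  by (rule linearI) (auto simp: bracket_def vec_eq_iff matrix_matrix_mult_def sum.distrib
        algebra_simps sum_distrib_left)

lemma linear_bracket_left: "linear (\<lambda>X. bracket X Y)"
  by (rule linearI) (auto simp: bracket_def vec_eq_iff matrix_matrix_mult_def sum.distrib
        algebra_simps sum_distrib_left)

lemma linear_eq_sum_axis:
  fixes L :: "real^'n \<Rightarrow> 'b::real_vector"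
  assumes "linear L"
  shows "L h = (\<Sum>k\<in>UNIV. h$k *\<^sub>R L (axis k 1))"
proof -
  have "L h = L (\<Sum>k\<in>UNIV. h$k *\<^sub>R axis k 1)"
    using basis_expansion[of h] by (simp add: scalar_mult_eq_scaleR)
  also have "\<dots> = (\<Sum>k\<in>UNIV. h$k *\<^sub>R L (axis k 1))"
    by (simp add: linear_sum[OF assms] linear_scale[OF assms])
  finally show ?thesis .
qed

lemma sum_axis_scaleR:
  fixes f :: "'n::finite \<Rightarrow> 'b::real_vector"
  shows "(\<Sum>j\<in>UNIV. axis k (1::real) $ j *\<^sub>R f j) = f k"
proof -
  have "(\<Sum>j\<in>UNIV. axis k (1::real) $ j *\<^sub>R f j) = (\<Sum>j\<in>UNIV. if k = j then f j else 0)"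
    by (intro sum.cong) (auto simp: axis_def)
  then show ?thesis by simp
qed

lemma smooth_fun_differentiable: "smooth_fun f \<Longrightarrow> f differentiable (at x)"
  using iter_pd.simps(1) unfolding smooth_fun_def by metis

lemma frechet_derivative_eq_sum_pd:
  fixes f :: "real^'n::finite \<Rightarrow> 'b::real_normed_vector"
  assumes "f differentiable (at z)"
  shows "frechet_derivative f (at z) w = (\<Sum>k\<in>UNIV. w$k *\<^sub>R pd k f z)"
  unfolding pd_def
  by (rule linear_eq_sum_axis[OF has_derivative_linear[OF frechet_derivative_works[THEN iffD1, OF assms]]])

lemma has_derivative_of_vanishing:
  assumes "(f has_derivative f') (at z)" "\<And>x. f x = 0"
  shows "f' = (\<lambda>_. 0)"
proof -
  have "f = (\<lambda>_. 0)" using assms(2) by auto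
  then show ?thesis using assms(1) has_derivative_const has_derivative_unique by metis
qed

lemma vanishes_if_euler_degree_minus_one:
  fixes f :: "'a::real_normed_vector \<Rightarrow> 'b::real_normed_vector"
  assumes df: "\<And>z. (f has_derivative f' z) (at z)"
    and euler: "\<And>z. f z + f' z (z - x0) = 0"
  shows "f x = 0"
proof -
  define y where "y = x - x0"
  define phi where "phi t = t *\<^sub>R f (x0 + t *\<^sub>R y)" for t :: real
  have "(phi has_derivative (\<lambda>_. 0)) (at t within UNIV)" for t
  proof -
    let ?z = "x0 + t *\<^sub>R y"
    have line: "((\<lambda>t. x0 + t *\<^sub>R y) has_derivative (\<lambda>h. h *\<^sub>R y)) (at t)"
      by (auto intro!: derivative_eq_intros)
    have "(phi has_derivative (\<lambda>h. t *\<^sub>R f' ?z (h *\<^sub>R y) + h *\<^sub>R f ?z)) (at t)"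
      unfolding phi_def
      by (rule has_derivative_scaleR[OF has_derivative_ident has_derivative_compose[OF line df]])
    moreover have "t *\<^sub>R f' ?z (h *\<^sub>R y) + h *\<^sub>R f ?z = 0" for h
    proof -
      have "t *\<^sub>R f' ?z (h *\<^sub>R y) = h *\<^sub>R f' ?z (?z - x0)"
        using linear_scale[OF has_derivative_linear[OF df]] by (simp add: mult.commute)
      then show ?thesis
        using euler[of ?z] by (metis scaleR_right_distrib scaleR_zero_right add.commute)
    qed
    ultimately show ?thesis by simp
  qed
  then have "phi 1 = phi 0"
    by (intro has_derivative_zero_unique[OF convex_UNIV]) auto
  then show ?thesis by (simp add: phi_def y_def)
qed

lemma invariant_if_directional_derivative_zero:
  fixes f :: "'a::real_normed_vector \<Rightarrow> 'b::real_normed_vector"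
  assumes df: "\<And>z. (f has_derivative f' z) (at z)"
    and "\<And>z. f' z v = 0"
  shows "f (x + c *\<^sub>R v) = f x"
proof -
  define psi where "psi s = f (x + s *\<^sub>R v)" for s :: real
  have "(psi has_derivative (\<lambda>_. 0)) (at s within UNIV)" for s
  proof -
    have line: "((\<lambda>s. x + s *\<^sub>R v) has_derivative (\<lambda>h. h *\<^sub>R v)) (at s)"
      by (auto intro!: derivative_eq_intros)
    have "(psi has_derivative (\<lambda>h. f' (x + s *\<^sub>R v) (h *\<^sub>R v))) (at s)"
      unfolding psi_def by (rule has_derivative_compose[OF line df])
    then show ?thesis
      using assms(2) linear_scale[OF has_derivative_linear[OF df]] by simp
  qed
  then have "psi c = psi 0"
    by (intro has_derivative_zero_unique[OF convex_UNIV]) auto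
  then show ?thesis by (simp add: psi_def)
qed

lemma interior_VF_expand:
  "interior_VF A V j z =
     (\<Sum>k\<in>UNIV. V$k *\<^sub>R pd k (A j) z) - (\<Sum>k\<in>UNIV. V$k *\<^sub>R pd j (A k) z)
     + bracket (\<Sum>k\<in>UNIV. V$k *\<^sub>R A k z) (A j z)"
proof -
  have "bracket (\<Sum>k\<in>UNIV. V$k *\<^sub>R A k z) (A j z) = (\<Sum>k\<in>UNIV. V$k *\<^sub>R bracket (A k z) (A j z))"
    by (simp add: linear_sum[OF linear_bracket_left] linear_scale[OF linear_bracket_left])
  then show ?thesis
    by (simp add: interior_VF_def curv_def algebra_simps sum.distrib sum_subtractf)
qed

context
  fixes A :: "'n::finite \<Rightarrow> real^'n \<Rightarrow> real^'r^'r" and x0 :: "real^'n"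
  assumes differentiable_A: "\<And>k z. A k differentiable (at z)"
    and gauge: "exponential_gauge A x0"
begin

lemma exponential_gauge_pd: "A k z + (\<Sum>j\<in>UNIV. (z - x0)$j *\<^sub>R pd k (A j) z) = 0"
proof -
  have "((\<lambda>x. \<Sum>j\<in>UNIV. (x - x0) $ j *\<^sub>R A j x) has_derivative
     (\<lambda>h. \<Sum>j\<in>UNIV. (z - x0) $ j *\<^sub>R frechet_derivative (A j) (at z) h + h $ j *\<^sub>R A j z)) (at z)"
    using differentiable_A
    by (auto intro!: derivative_eq_intros bounded_linear_imp_has_derivative[OF bounded_linear_vec_nth]
        simp: frechet_derivative_works)
  moreover have "(\<Sum>j\<in>UNIV. (x - x0) $ j *\<^sub>R A j x) = 0" for x
    using gauge unfolding exponential_gauge_def by blast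
  ultimately have "(\<lambda>h. \<Sum>j\<in>UNIV. (z - x0) $ j *\<^sub>R frechet_derivative (A j) (at z) h + h $ j *\<^sub>R A j z)
      = (\<lambda>_. 0)"
    by (rule has_derivative_of_vanishing)
  from fun_cong[OF this, of "axis k 1"]
  have "(\<Sum>j\<in>UNIV. (z - x0) $ j *\<^sub>R pd k (A j) z + axis k 1 $ j *\<^sub>R A j z) = 0"
    by (simp only: pd_def)
  then show ?thesis
    by (simp add: sum.distrib sum_axis_scaleR add.commute)
qed

lemma exponential_gauge_radial_curv:
  "(\<Sum>j\<in>UNIV. (z - x0)$j *\<^sub>R curv A p j z) = - (A p z + frechet_derivative (A p) (at z) (z - x0))"
proof -
  let ?y = "z - x0"
  have "bracket (A p z) (\<Sum>j\<in>UNIV. ?y$j *\<^sub>R A j z) = (\<Sum>j\<in>UNIV. ?y$j *\<^sub>R bracket (A p z) (A j z))"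
    by (simp add: linear_sum[OF linear_bracket_right] linear_scale[OF linear_bracket_right])
  then have "(\<Sum>j\<in>UNIV. ?y$j *\<^sub>R curv A p j z) =
    (\<Sum>j\<in>UNIV. ?y$j *\<^sub>R pd p (A j) z) - (\<Sum>j\<in>UNIV. ?y$j *\<^sub>R pd j (A p) z)
     + bracket (A p z) (\<Sum>j\<in>UNIV. ?y$j *\<^sub>R A j z)"
    by (simp add: curv_def algebra_simps sum.distrib sum_subtractf)
  also have "(\<Sum>j\<in>UNIV. ?y$j *\<^sub>R pd p (A j) z) = - A p z"
    using exponential_gauge_pd[of p z] by (simp add: eq_neg_iff_add_eq_0 add.commute)
  also have "(\<Sum>j\<in>UNIV. ?y$j *\<^sub>R pd j (A p) z) = frechet_derivative (A p) (at z) ?y"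
    by (simp add: frechet_derivative_eq_sum_pd[OF differentiable_A])
  also have "(\<Sum>j\<in>UNIV. ?y$j *\<^sub>R A j z) = 0"
    using gauge by (simp add: exponential_gauge_def)
  finally show ?thesis by (simp add: linear_0[OF linear_bracket_right])
qed

context
  fixes V :: "real^'n"
  assumes interior_VF_zero: "\<And>j z. interior_VF A V j z = 0"
begin

private definition S :: "real^'n \<Rightarrow> real^'r^'r" where
  "S z = (\<Sum>k\<in>UNIV. V$k *\<^sub>R A k z)"

private lemma S_has_derivative:
  "(S has_derivative (\<lambda>h. \<Sum>k\<in>UNIV. V$k *\<^sub>R frechet_derivative (A k) (at z) h)) (at z)"
  unfolding S_def using differentiable_A
  by (auto intro!: derivative_eq_intros simp: frechet_derivative_works)

private lemma S_euler:
  "S z + (\<Sum>k\<in>UNIV. V$k *\<^sub>R frechet_derivative (A k) (at z) (z - x0)) = 0"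
proof -
  let ?y = "z - x0"
  have "0 = (\<Sum>j\<in>UNIV. ?y$j *\<^sub>R interior_VF A V j z)"
    by (simp add: interior_VF_zero)
  also have "\<dots> = (\<Sum>p\<in>UNIV. V$p *\<^sub>R (\<Sum>j\<in>UNIV. ?y$j *\<^sub>R curv A p j z))"
    unfolding interior_VF_def scaleR_sum_right
    by (subst sum.swap) (simp add: mult.commute)
  also have "\<dots> = - (S z + (\<Sum>k\<in>UNIV. V$k *\<^sub>R frechet_derivative (A k) (at z) ?y))"
    by (simp only: exponential_gauge_radial_curv S_def scaleR_minus_right scaleR_right_distrib
        sum_negf sum.distrib)
  finally have "- (S z + (\<Sum>k\<in>UNIV. V$k *\<^sub>R frechet_derivative (A k) (at z) ?y)) = 0"
    by (rule sym)
  then show ?thesis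
    by (rule iffD1[OF neg_equal_0_iff_equal])
qed

lemma interior_VF_zero_transversal: "(\<Sum>k\<in>UNIV. V$k *\<^sub>R A k x) = 0"
  using vanishes_if_euler_degree_minus_one[OF S_has_derivative S_euler] by (simp add: S_def)

lemma interior_VF_zero_translation_invariant: "A j (x + c *\<^sub>R V) = A j x"
proof (rule invariant_if_directional_derivative_zero)
  show "(A j has_derivative frechet_derivative (A j) (at z)) (at z)" for z
    using differentiable_A frechet_derivative_works by blast
  fix z
  have "S x = 0" for x
    using interior_VF_zero_transversal by (simp add: S_def)
  from fun_cong[OF has_derivative_of_vanishing[OF S_has_derivative[of z] this], of "axis j 1"]
  have "(\<Sum>k\<in>UNIV. V$k *\<^sub>R pd j (A k) z) = 0"
    by (simp only: pd_def)
  then have "(\<Sum>k\<in>UNIV. V$k *\<^sub>R pd k (A j) z) = 0"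
    using interior_VF_expand[of A V j z] interior_VF_zero interior_VF_zero_transversal
    by (simp add: linear_0[OF linear_bracket_left])
  then show "frechet_derivative (A j) (at z) V = 0"
    by (simp add: frechet_derivative_eq_sum_pd[OF differentiable_A])
qed

end

end

theorem mainTheorem12:
  fixes G :: "(real^'r^'r) set"
    and A :: "'n::finite \<Rightarrow> real^'n \<Rightarrow> real^'r^'r"
    and x0 V :: "real^'n" and t0 :: real
  assumes "compact_subgroup_SO G"
    and "\<forall>i x. A i x \<in> lie_algebra G"
    and "\<forall>i. smooth_fun (A i)"
    and "shrinking_soliton A x0 t0"
    and "V \<noteq> 0"
    and "\<forall>j x. interior_VF A V j x = 0"
    and "exponential_gauge A x0"
  shows "(\<forall>x. (\<Sum>j\<in>UNIV. V $ j *\<^sub>R A j x) = 0) \<and>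
         (\<forall>x c j. A j (x + c *\<^sub>R V) = A j x)"
proof -
  have differentiable: "A k differentiable (at z)" for k z
    using assms(3) smooth_fun_differentiable by blast
  show ?thesis
    using interior_VF_zero_transversal[OF differentiable assms(7)]
      interior_VF_zero_translation_invariant[OF differentiable assms(7)] assms(6)
    by simp
qed

end
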